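(* Let $\Gamma$ be an uncountable set, $K\subset\mathbb{R}^\Gamma$ compact, and $D_1,D_2$ separable metrizable spaces. If $f:\Gamma\to D_2$ is a determining function and $g:D_1\to D_2$ is a continuous surjection, then there exists a determining function $f':\Gamma\to D_1$.
   Context: A map $f:\Gamma\to D$ into a separable metrizable space $D$ is a determining function (for $K$) if for every $x\in K$, every compact $C\subset D$ and every $\varepsilon>0$, the set $\{\gamma\in f^{-1}(C): |x_\gamma|>\varepsilon\}$ is finite. *)

theory Defs
  imports "HOL-Analysis.Analysis"
begin

text \<open>The index set Gamma is the universe of the type 'g; points of R^Gamma are
  functions 'g => real, carrying the product topology (type class instance).\<close>

definition determining :: "'d topology \<Rightarrow> ('g \<Rightarrow> real) set \<Rightarrow> ('g \<Rightarrow> 'd) \<Rightarrow> bool" where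
  "determining D K f \<longleftrightarrow>
     (\<forall>\<gamma>. f \<gamma> \<in> topspace D) \<and>
     (\<forall>x\<in>K. \<forall>C. compactin D C \<longrightarrow> (\<forall>\<epsilon>>0. finite {\<gamma>. f \<gamma> \<in> C \<and> \<bar>x \<gamma>\<bar> > \<epsilon>}))"

end

theory Submission
  imports Defs
begin

text \<open>Lift f through g by choosing a preimage of each value. Because the continuous image
  g ` C of a compact set C is compact, the lift lands in C only at indices where f lands in
  g ` C, so its exceptional sets are subsets of finite ones. Neither the uncountability of
  the index set, the compactness of K, nor separability or metrizability is needed.\<close>

lemma determining_lift:
  assumes f: "determining D2 K f" and g: "continuous_map D1 D2 g"
    and lift_in: "range f' \<subseteq> topspace D1" and lift_eq: "g \<circ> f' = f"
  shows "determining D1 K f'"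
  unfolding determining_def
proof (intro conjI ballI allI impI)
  fix \<gamma>
  show "f' \<gamma> \<in> topspace D1"
    using lift_in by blast
next
  fix x C and \<epsilon> :: real
  assume "x \<in> K" "compactin D1 C" "\<epsilon> > 0"
  moreover have "compactin D2 (g ` C)"
    using \<open>compactin D1 C\<close> g by (rule image_compactin)
  ultimately have "finite {\<gamma>. f \<gamma> \<in> g ` C \<and> \<bar>x \<gamma>\<bar> > \<epsilon>}"
    using f unfolding determining_def by blast
  moreover have "{\<gamma>. f' \<gamma> \<in> C \<and> \<bar>x \<gamma>\<bar> > \<epsilon>} \<subseteq> {\<gamma>. f \<gamma> \<in> g ` C \<and> \<bar>x \<gamma>\<bar> > \<epsilon>}"
    by (auto simp flip: lift_eq)
  ultimately show "finite {\<gamma>. f' \<gamma> \<in> C \<and> \<bar>x \<gamma>\<bar> > \<epsilon>}"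
    by (rule finite_subset[rotated])
qed

lemma lift_through_surjection:
  assumes "range f \<subseteq> g ` S"
  obtains f' where "range f' \<subseteq> S" "g \<circ> f' = f"
proof -
  have "\<exists>x. x \<in> S \<and> g x = f \<gamma>" for \<gamma>
    using assms by (metis imageE rangeI subsetD)
  then obtain f' where "\<forall>\<gamma>. f' \<gamma> \<in> S \<and> g (f' \<gamma>) = f \<gamma>"
    by metis
  then show ?thesis
    by (intro that) auto
qed

theorem lemma2p4:
  fixes K :: "('g \<Rightarrow> real) set"
    and D1 :: "'a topology" and D2 :: "'b topology"
    and f :: "'g \<Rightarrow> 'b" and g :: "'a \<Rightarrow> 'b"
  assumes "uncountable (UNIV :: 'g set)"
    and "compact K"
    and "separable_space D1" "metrizable_space D1"
    and "separable_space D2" "metrizable_space D2"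
    and "determining D2 K f"
    and "continuous_map D1 D2 g" "g ` topspace D1 = topspace D2"
  shows "\<exists>f' :: 'g \<Rightarrow> 'a. determining D1 K f'"
proof -
  have "range f \<subseteq> g ` topspace D1"
    using \<open>determining D2 K f\<close> \<open>g ` topspace D1 = topspace D2\<close>
    by (auto simp: determining_def)
  then obtain f' where "range f' \<subseteq> topspace D1" "g \<circ> f' = f"
    by (rule lift_through_surjection)
  with \<open>determining D2 K f\<close> \<open>continuous_map D1 D2 g\<close> have "determining D1 K f'"
    by (rule determining_lift)
  then show ?thesis
    by blast
qed

end
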